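(* Let $m,n\in\mathbb{N}$ and $f:\mathbb{Z}_n\to\mathbb{C}$. Suppose $\Gamma\subseteq\mathbb{Z}_n$ satisfies $\|f-f|_\Gamma\|_2^2\le\epsilon$ for some $\epsilon>0$. Let $\ell:=\min(n,m)$ and let $g:\mathbb{Z}_m\to\mathbb{C}$ be defined by $g(x)=f(x)$ for $0\le x<\ell$ and $g(x)=0$ otherwise. Let $\epsilon'>0$, let $r=|\Gamma|\,\|f\|_2^2/(2\epsilon')$ and $\Gamma'=\bigcup_{\alpha\in\Gamma}\{\beta\in\mathbb{Z}_m:|\frac mn\alpha-\beta|_m\le r+1\}$. Then, with $t=n/m$, \[\|g-g|_{\Gamma'}\|_2^2\le t\epsilon+\epsilon'+2\sqrt{t\epsilon\epsilon'}.\]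
   Context: $\mathbb{Z}_n=\{0,\dots,n-1\}$ with addition mod $n$; elements are treated as these integer representatives. For $h:\mathbb{Z}_n\to\mathbb{C}$: $\langle h_1,h_2\rangle=\frac1n\sum_x h_1(x)\overline{h_2(x)}$, $\|h\|_2^2=\langle h,h\rangle$, $\chi_\alpha(x)=\exp(2\pi i\alpha x/n)$, $\widehat h(\alpha)=\langle h,\chi_\alpha\rangle$, and for $\Gamma\subseteq\mathbb{Z}_n$, $h|_\Gamma=\sum_{\alpha\in\Gamma}\widehat h(\alpha)\chi_\alpha$; analogously on $\mathbb{Z}_m$ with $m$ in place of $n$. For $k\in\mathbb{N}$, $x\in\mathbb{R}$: $|x|_k=\min\{|x-kz|:z\in\mathbb{Z}\}$. *)

theory Defs
  imports Complex_Main
begin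

text \<open>Z_n is represented by the integer representatives {0..<n} (type nat);
functions Z_n -> C are functions nat => complex whose values on {0..<n} matter.\<close>

definition zinner :: "nat \<Rightarrow> (nat \<Rightarrow> complex) \<Rightarrow> (nat \<Rightarrow> complex) \<Rightarrow> complex" where
  "zinner n h1 h2 = (1 / of_nat n) * (\<Sum>x<n. h1 x * cnj (h2 x))"

definition znorm2sq :: "nat \<Rightarrow> (nat \<Rightarrow> complex) \<Rightarrow> real" where
  "znorm2sq n h = Re (zinner n h h)"

definition zchar :: "nat \<Rightarrow> nat \<Rightarrow> nat \<Rightarrow> complex" where
  "zchar n \<alpha> x = exp (2 * of_real pi * \<i> * of_nat \<alpha> * of_nat x / of_nat n)"

definition zfourier :: "nat \<Rightarrow> (nat \<Rightarrow> complex) \<Rightarrow> nat \<Rightarrow> complex" where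
  "zfourier n h \<alpha> = zinner n h (zchar n \<alpha>)"

definition zrestr :: "nat \<Rightarrow> (nat \<Rightarrow> complex) \<Rightarrow> nat set \<Rightarrow> nat \<Rightarrow> complex" where
  "zrestr n h \<Gamma> = (\<lambda>x. \<Sum>\<alpha>\<in>\<Gamma>. zfourier n h \<alpha> * zchar n \<alpha> x)"

definition distk :: "nat \<Rightarrow> real \<Rightarrow> real" where
  "distk k x = Inf {\<bar>x - real k * of_int z\<bar> | z. True}"

end

theory Submission
  imports Defs "HOL-Analysis.Analysis"
begin

text \<open>Truncating \<open>f|\<^sub>\<Gamma> = \<Sum>\<^sub>\<alpha> f\<^sup>^(\<alpha>) \<chi>\<^sub>\<alpha>\<close> to \<open>[0, \<ell>)\<close> and reading it on \<open>\<int>\<^sub>m\<close>, each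
truncated character \<open>\<chi>\<^sub>\<alpha>\<close> has as its \<open>\<beta>\<close>-th Fourier coefficient a geometric sum of modulus at
most \<open>1 / (2 |m\<alpha>/n - \<beta>|\<^sub>m)\<close>. Summing the inverse squares of these distances over all \<open>\<beta> \<notin> \<Gamma>'\<close>,
where they exceed \<open>r + 1\<close>, shows that the part of the truncated character outside \<open>\<Gamma>'\<close> has
squared \<open>\<ell>\<^sup>2\<close>-norm at most \<open>m / (2r)\<close>. Cauchy--Schwarz over \<open>\<alpha> \<in> \<Gamma>\<close> together with Bessel's
inequality bounds the contribution of the main part by \<open>m\<epsilon>'\<close> (this is what fixes \<open>r\<close>), while
the truncated error \<open>f - f|\<^sub>\<Gamma>\<close> contributes at most \<open>n\<epsilon>\<close>, since the projection away from \<open>\<Gamma>'\<close>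
does not increase norms. The triangle inequality and normalisation by \<open>m\<close> give the bound.\<close>

definition e2pi :: "real \<Rightarrow> complex" where
  "e2pi \<theta> = exp (2 * of_real pi * \<i> * of_real \<theta>)"

lemma e2pi_add: "e2pi (a + b) = e2pi a * e2pi b"
  unfolding e2pi_def by (simp add: exp_add[symmetric] algebra_simps)

lemma cnj_e2pi: "cnj (e2pi a) = e2pi (- a)"
  unfolding e2pi_def by (simp add: exp_cnj)

lemma e2pi_power: "e2pi a ^ k = e2pi (real k * a)"
  unfolding e2pi_def by (simp add: exp_of_nat_mult[symmetric] algebra_simps)

lemma e2pi_of_int: "e2pi (of_int k) = 1"
  unfolding e2pi_def exp_eq_1 by simp

lemma e2pi_eq_1_imp_Ints: "e2pi \<theta> = 1 \<Longrightarrow> \<theta> \<in> \<int>"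
  unfolding e2pi_def exp_eq_1 by (auto simp: algebra_simps)

lemma norm_e2pi [simp]: "cmod (e2pi \<theta>) = 1"
proof -
  have "e2pi \<theta> = exp (\<i> * of_real (2 * pi * \<theta>))"
    unfolding e2pi_def by (simp add: algebra_simps)
  thus ?thesis by simp
qed

lemma norm_e2pi_minus_1: "cmod (e2pi y - 1) = 2 * \<bar>sin (pi * y)\<bar>"
proof -
  have e: "e2pi y = cis (2 * pi * y)"
    unfolding e2pi_def cis_conv_exp by (simp add: algebra_simps)
  have "(cmod (e2pi y - 1))\<^sup>2 = (cos (2 * pi * y) - 1)\<^sup>2 + (sin (2 * pi * y))\<^sup>2"
    unfolding e by (simp add: cmod_def)
  also have "\<dots> = (sin (2 * pi * y))\<^sup>2 + (cos (2 * pi * y))\<^sup>2 - 2 * cos (2 * pi * y) + 1"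
    by (simp add: power2_diff)
  also have "\<dots> = 2 - 2 * cos (2 * (pi * y))"
    by (simp only: sin_cos_squared_add) (simp add: mult.assoc)
  also have "\<dots> = (2 * \<bar>sin (pi * y)\<bar>)\<^sup>2"
    by (simp add: cos_double_sin power_mult_distrib)
  finally show ?thesis by (rule power2_eq_imp_eq) auto
qed

lemma jordan_sin_ge:
  assumes "0 \<le> x" "x \<le> pi / 2"
  shows "2 / pi * x \<le> sin x"
proof -
  have concave: "concave_on {0..pi} sin"
    by (rule f''_le0_imp_concave[where f' = cos and f'' = "\<lambda>x. - sin x"])
       (auto intro!: derivative_eq_intros sin_ge_zero)
  define t where "t = 2 / pi * x"
  have t: "0 \<le> t" "t \<le> 1"
    using assms pi_gt_zero unfolding t_def by (auto simp: field_simps)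
  have "(1 - t) * sin 0 + t * sin (pi / 2) \<le> sin ((1 - t) *\<^sub>R 0 + t *\<^sub>R (pi / 2))"
    by (rule concave_onD[OF concave]) (use t in auto)
  moreover have "(1 - t) *\<^sub>R 0 + t *\<^sub>R (pi / 2) = x"
    unfolding t_def by simp
  ultimately show ?thesis
    unfolding t_def by simp
qed

lemma abs_sin_pi_ge:
  assumes "\<bar>y\<bar> \<le> 1 / 2"
  shows "2 * \<bar>y\<bar> \<le> \<bar>sin (pi * y)\<bar>"
proof -
  have "2 / pi * (pi * \<bar>y\<bar>) \<le> sin (pi * \<bar>y\<bar>)"
    using mult_left_mono[OF assms, of pi] by (intro jordan_sin_ge) simp_all
  moreover have "\<bar>sin (pi * y)\<bar> = \<bar>sin (pi * \<bar>y\<bar>)\<bar>"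
  proof (cases "y \<ge> 0")
    case False
    hence "pi * \<bar>y\<bar> = - (pi * y)"
      by simp
    thus ?thesis
      by (simp only: sin_minus abs_minus_cancel)
  qed simp
  ultimately show ?thesis by simp
qed

section \<open>Characters of \<open>\<int>\<^sub>N\<close>\<close>

lemma zchar_eq_e2pi: "zchar N a x = e2pi (real a * real x / real N)"
  unfolding zchar_def e2pi_def by (simp add: algebra_simps)

lemma zchar_commute: "zchar N a x = zchar N x a"
  unfolding zchar_def by (simp add: algebra_simps)

lemma zchar_mult_cnj_zchar:
  "zchar n \<alpha> x * cnj (zchar m \<beta> x) = e2pi (real \<alpha> / real n - real \<beta> / real m) ^ x"
proof -
  have "zchar n \<alpha> x * cnj (zchar m \<beta> x)
      = e2pi (real \<alpha> * real x / real n + - (real \<beta> * real x / real m))"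
    unfolding zchar_eq_e2pi cnj_e2pi e2pi_add by simp
  also have "real \<alpha> * real x / real n + - (real \<beta> * real x / real m)
      = real x * (real \<alpha> / real n - real \<beta> / real m)"
    by (simp add: algebra_simps)
  finally show ?thesis by (simp add: e2pi_power)
qed

lemma zchar_orthogonal:
  assumes "N > 0" "a < N" "b < N"
  shows "(\<Sum>x<N. zchar N a x * cnj (zchar N b x)) = (if a = b then of_nat N else 0)"
proof (cases "a = b")
  case True
  thus ?thesis
    unfolding zchar_mult_cnj_zchar by (simp add: e2pi_def)
next
  case False
  define z where "z = e2pi (real a / real N - real b / real N)"
  have "z \<noteq> 1"
  proof
    assume "z = 1"
    then obtain k where k: "real a / real N - real b / real N = of_int k"
      unfolding z_def by (metis e2pi_eq_1_imp_Ints Ints_cases)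
    hence "real a - real b = of_int k * real N"
      using assms by (simp add: field_simps)
    moreover have "\<bar>real a - real b\<bar> < real N"
      using assms by auto
    ultimately have "\<bar>of_int k :: real\<bar> < 1"
      using assms by (simp add: abs_mult)
    hence "k = 0" by linarith
    thus False
      using k False assms by (simp add: field_simps)
  qed
  moreover have "z ^ N = 1"
  proof -
    have "real N * (real a / real N - real b / real N) = of_int (int a - int b)"
      using assms by (simp add: field_simps)
    thus ?thesis
      unfolding z_def e2pi_power by (simp only: e2pi_of_int)
  qed
  ultimately have "(\<Sum>x<N. z ^ x) = 0"
    by (simp add: geometric_sum)
  thus ?thesis
    using False unfolding zchar_mult_cnj_zchar z_def by simp
qed

lemma zchar_orthogonal_dual:
  assumes "N > 0" "x < N" "y < N"
  shows "(\<Sum>\<beta><N. zchar N \<beta> x * cnj (zchar N \<beta> y)) = (if x = y then of_nat N else 0)"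
  using zchar_orthogonal[OF assms] by (simp add: zchar_commute[of N _ x] zchar_commute[of N _ y])

lemma zfourier_inversion:
  assumes "N > 0" "x < N"
  shows "(\<Sum>\<beta><N. zfourier N u \<beta> * zchar N \<beta> x) = u x"
proof -
  have "(\<Sum>\<beta><N. zfourier N u \<beta> * zchar N \<beta> x)
      = (\<Sum>\<beta><N. \<Sum>y<N. (1 / of_nat N) * u y * (zchar N \<beta> x * cnj (zchar N \<beta> y)))"
    unfolding zfourier_def zinner_def sum_distrib_right sum_distrib_left
    by (intro sum.cong refl) (simp add: mult_ac)
  also have "\<dots> = (\<Sum>y<N. (1 / of_nat N) * u y * (\<Sum>\<beta><N. zchar N \<beta> x * cnj (zchar N \<beta> y)))"
    by (subst sum.swap) (simp add: sum_distrib_left)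
  also have "\<dots> = (\<Sum>y<N. if y = x then u x else 0)"
    using assms by (intro sum.cong refl) (auto simp: zchar_orthogonal_dual)
  also have "\<dots> = u x"
    using assms by simp
  finally show ?thesis .
qed

lemma zfourier_cong:
  "(\<And>x. x < N \<Longrightarrow> u x = v x) \<Longrightarrow> zfourier N u \<beta> = zfourier N v \<beta>"
  unfolding zfourier_def zinner_def by (intro arg_cong[where f = "\<lambda>s. (1 / of_nat N) * s"] sum.cong) auto

lemma zfourier_add: "zfourier N (\<lambda>x. u x + v x) \<beta> = zfourier N u \<beta> + zfourier N v \<beta>"
  unfolding zfourier_def zinner_def by (simp add: sum.distrib distrib_left distrib_right)

lemma zfourier_sum:
  "zfourier N (\<lambda>x. \<Sum>i\<in>I. a i * v i x) \<beta> = (\<Sum>i\<in>I. a i * zfourier N (v i) \<beta>)"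
  unfolding zfourier_def zinner_def sum_distrib_left sum_distrib_right
  by (subst sum.swap) (simp add: mult_ac)

definition l2norm :: "nat \<Rightarrow> (nat \<Rightarrow> complex) \<Rightarrow> real" where
  "l2norm N u = L2_set (\<lambda>x. cmod (u x)) {..<N}"

lemma l2norm_power2: "(l2norm N u)\<^sup>2 = (\<Sum>x<N. (cmod (u x))\<^sup>2)"
  unfolding l2norm_def L2_set_def by (simp add: sum_nonneg)

lemma l2norm_nonneg: "0 \<le> l2norm N u"
  unfolding l2norm_def by (rule L2_set_nonneg)

lemma sum_mult_cnj_self: "(\<Sum>x\<in>A. u x * cnj (u x)) = of_real (\<Sum>x\<in>A. (cmod (u x))\<^sup>2)"
  by (simp only: of_real_sum complex_norm_square)

lemma znorm2sq_eq_l2norm: "znorm2sq N u = (l2norm N u)\<^sup>2 / real N"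
  unfolding znorm2sq_def zinner_def l2norm_power2 sum_mult_cnj_self
  by (cases "N = 0") (simp_all add: Re_divide power2_eq_square)

lemma l2norm_cong: "(\<And>x. x < N \<Longrightarrow> u x = v x) \<Longrightarrow> l2norm N u = l2norm N v"
  unfolding l2norm_def by (intro L2_set_cong) auto

lemma l2norm_add_le: "l2norm N (\<lambda>x. u x + v x) \<le> l2norm N u + l2norm N v"
proof -
  have "l2norm N (\<lambda>x. u x + v x) \<le> L2_set (\<lambda>x. cmod (u x) + cmod (v x)) {..<N}"
    unfolding l2norm_def by (intro L2_set_mono norm_triangle_ineq) auto
  also have "\<dots> \<le> l2norm N u + l2norm N v"
    unfolding l2norm_def by (rule L2_set_triangle_ineq)
  finally show ?thesis .
qed

lemma l2norm_scale: "l2norm N (\<lambda>x. a * u x) = cmod a * l2norm N u"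
  unfolding l2norm_def by (simp add: L2_set_right_distrib norm_mult)

lemma l2norm_sum_le: "finite I \<Longrightarrow> l2norm N (\<lambda>x. \<Sum>i\<in>I. w i x) \<le> (\<Sum>i\<in>I. l2norm N (w i))"
proof (induction I rule: finite_induct)
  case empty
  show ?case by (simp add: l2norm_def L2_set_def)
next
  case (insert i I)
  have "l2norm N (\<lambda>x. \<Sum>j\<in>insert i I. w j x) = l2norm N (\<lambda>x. w i x + (\<Sum>j\<in>I. w j x))"
    using insert by simp
  also have "\<dots> \<le> l2norm N (w i) + l2norm N (\<lambda>x. \<Sum>j\<in>I. w j x)"
    by (rule l2norm_add_le)
  finally show ?case
    using insert by simp
qed

lemma l2norm_sum_scale_power2_le:
  assumes "finite I"
  shows "(l2norm N (\<lambda>x. \<Sum>i\<in>I. c i * w i x))\<^sup>2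
    \<le> (\<Sum>i\<in>I. (cmod (c i))\<^sup>2) * (\<Sum>i\<in>I. (l2norm N (w i))\<^sup>2)"
proof -
  have "l2norm N (\<lambda>x. \<Sum>i\<in>I. c i * w i x) \<le> (\<Sum>i\<in>I. \<bar>cmod (c i)\<bar> * \<bar>l2norm N (w i)\<bar>)"
    using l2norm_sum_le[OF assms, of N "\<lambda>i x. c i * w i x"] by (simp add: l2norm_scale l2norm_nonneg)
  also have "\<dots> \<le> L2_set (\<lambda>i. cmod (c i)) I * L2_set (\<lambda>i. l2norm N (w i)) I"
    by (rule L2_set_mult_ineq)
  finally have "(l2norm N (\<lambda>x. \<Sum>i\<in>I. c i * w i x))\<^sup>2
      \<le> (L2_set (\<lambda>i. cmod (c i)) I)\<^sup>2 * (L2_set (\<lambda>i. l2norm N (w i)) I)\<^sup>2"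
    unfolding power_mult_distrib[symmetric] by (intro power_mono l2norm_nonneg)
  thus ?thesis
    unfolding L2_set_def by (simp add: sum_nonneg)
qed

lemma l2norm_zchar_sum_power2:
  assumes "N > 0" "C \<subseteq> {..<N}"
  shows "(l2norm N (\<lambda>x. \<Sum>\<beta>\<in>C. c \<beta> * zchar N \<beta> x))\<^sup>2 = real N * (\<Sum>\<beta>\<in>C. (cmod (c \<beta>))\<^sup>2)"
proof -
  have fin: "finite C"
    using assms finite_subset by blast
  have "complex_of_real ((l2norm N (\<lambda>x. \<Sum>\<beta>\<in>C. c \<beta> * zchar N \<beta> x))\<^sup>2)
     = (\<Sum>x<N. (\<Sum>\<beta>\<in>C. c \<beta> * zchar N \<beta> x) * cnj (\<Sum>\<beta>\<in>C. c \<beta> * zchar N \<beta> x))"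
    unfolding l2norm_power2 sum_mult_cnj_self ..
  also have "\<dots> = (\<Sum>x<N. \<Sum>\<beta>\<in>C. \<Sum>\<gamma>\<in>C. c \<beta> * cnj (c \<gamma>) * (zchar N \<beta> x * cnj (zchar N \<gamma> x)))"
    unfolding cnj_sum sum_product by (intro sum.cong refl) (simp add: mult_ac)
  also have "\<dots> = (\<Sum>\<beta>\<in>C. \<Sum>\<gamma>\<in>C. c \<beta> * cnj (c \<gamma>) * (\<Sum>x<N. zchar N \<beta> x * cnj (zchar N \<gamma> x)))"
    by (subst sum.swap) (simp add: sum.swap[of _ "{..<N}"] sum_distrib_left)
  also have "\<dots> = (\<Sum>\<beta>\<in>C. \<Sum>\<gamma>\<in>C. if \<beta> = \<gamma> then c \<beta> * cnj (c \<beta>) * of_nat N else 0)"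
    using assms by (intro sum.cong refl) (auto simp: zchar_orthogonal subset_iff)
  also have "\<dots> = (\<Sum>\<beta>\<in>C. c \<beta> * cnj (c \<beta>) * of_nat N)"
    using fin by (simp add: sum.delta)
  also have "\<dots> = complex_of_real (real N * (\<Sum>\<beta>\<in>C. (cmod (c \<beta>))\<^sup>2))"
    by (simp add: sum_distrib_left[symmetric] sum_distrib_right[symmetric] sum_mult_cnj_self mult.commute)
  finally show ?thesis
    using of_real_eq_iff by blast
qed

section \<open>The residual \<open>u - u|\<^sub>B\<close>\<close>

definition zresidual :: "nat \<Rightarrow> nat set \<Rightarrow> (nat \<Rightarrow> complex) \<Rightarrow> nat \<Rightarrow> complex" where
  "zresidual N B u = (\<lambda>x. u x - zrestr N u B x)"

lemma zresidual_eq_zrestr_compl: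
  assumes "N > 0" "B \<subseteq> {..<N}" "x < N"
  shows "zresidual N B u x = zrestr N u ({..<N} - B) x"
proof -
  have "u x = (\<Sum>\<beta><N. zfourier N u \<beta> * zchar N \<beta> x)"
    using zfourier_inversion assms by simp
  also have "\<dots> = (\<Sum>\<beta>\<in>{..<N} - B. zfourier N u \<beta> * zchar N \<beta> x)
      + (\<Sum>\<beta>\<in>B. zfourier N u \<beta> * zchar N \<beta> x)"
    using assms by (intro sum.subset_diff) auto
  finally show ?thesis
    unfolding zresidual_def zrestr_def by simp
qed

lemma l2norm_zresidual_power2:
  assumes "N > 0" "B \<subseteq> {..<N}"
  shows "(l2norm N (zresidual N B u))\<^sup>2 = real N * (\<Sum>\<beta>\<in>{..<N} - B. (cmod (zfourier N u \<beta>))\<^sup>2)"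
proof -
  have "l2norm N (zresidual N B u) = l2norm N (\<lambda>x. \<Sum>\<beta>\<in>{..<N} - B. zfourier N u \<beta> * zchar N \<beta> x)"
    using zresidual_eq_zrestr_compl[OF assms] by (intro l2norm_cong) (simp add: zrestr_def)
  thus ?thesis
    using l2norm_zchar_sum_power2[OF assms(1), of "{..<N} - B"] by auto
qed

lemma parseval:
  assumes "N > 0"
  shows "(l2norm N u)\<^sup>2 = real N * (\<Sum>\<beta><N. (cmod (zfourier N u \<beta>))\<^sup>2)"
  using l2norm_zresidual_power2[OF assms, of "{}" u] by (simp add: zresidual_def zrestr_def)

lemma bessel:
  assumes "N > 0" "B \<subseteq> {..<N}"
  shows "real N * (\<Sum>\<beta>\<in>B. (cmod (zfourier N u \<beta>))\<^sup>2) \<le> (l2norm N u)\<^sup>2"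
  unfolding parseval[OF assms(1)] using assms by (intro mult_left_mono sum_mono2) auto

lemma l2norm_zresidual_le:
  assumes "N > 0" "B \<subseteq> {..<N}"
  shows "l2norm N (zresidual N B u) \<le> l2norm N u"
proof -
  have "(l2norm N (zresidual N B u))\<^sup>2 \<le> (l2norm N u)\<^sup>2"
    unfolding l2norm_zresidual_power2[OF assms]
    using bessel[OF assms(1), of "{..<N} - B" u] by simp
  thus ?thesis
    using l2norm_nonneg power2_le_imp_le by blast
qed

lemma zresidual_cong:
  "(\<And>x. x < N \<Longrightarrow> u x = v x) \<Longrightarrow> x < N \<Longrightarrow> zresidual N B u x = zresidual N B v x"
  unfolding zresidual_def zrestr_def using zfourier_cong[of N u v] by simp

lemma zresidual_add: "zresidual N B (\<lambda>x. u x + v x) x = zresidual N B u x + zresidual N B v x"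
  unfolding zresidual_def zrestr_def zfourier_add by (simp add: distrib_right sum.distrib)

lemma zresidual_sum:
  "zresidual N B (\<lambda>x. \<Sum>i\<in>I. a i * v i x) x = (\<Sum>i\<in>I. a i * zresidual N B (v i) x)"
  unfolding zresidual_def zrestr_def zfourier_sum
  by (simp add: sum_distrib_right sum_distrib_left sum_subtractf right_diff_distrib mult_ac
      sum.swap[of _ B])

section \<open>Sums of inverse squares of distances on \<open>\<real>/m\<int>\<close>\<close>

lemma distk_le: "distk k v \<le> \<bar>v - real k * of_int z\<bar>"
  unfolding distk_def by (rule cInf_lower) (auto intro: bdd_belowI[of _ 0])

lemma distk_attained:
  assumes "k > 0"
  obtains z :: int where "distk k v = \<bar>v - real k * of_int z\<bar>"
proof -
  define z0 where "z0 = \<lfloor>v / real k + 1 / 2\<rfloor>"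
  have scaled: "real k * \<bar>v / real k - of_int w\<bar> = \<bar>v - real k * of_int w\<bar>" for w
    using assms by (simp add: abs_mult[symmetric] field_simps)
  have "\<bar>v / real k - of_int z0\<bar> \<le> \<bar>v / real k - of_int z\<bar>" for z
  proof (cases "z = z0")
    case False
    hence "1 \<le> \<bar>z - z0\<bar>"
      by linarith
    hence "\<bar>of_int z - of_int z0 :: real\<bar> \<ge> 1"
      by (metis of_int_1_le_iff of_int_abs of_int_diff)
    thus ?thesis
      unfolding z0_def by linarith
  qed simp
  hence "\<bar>v - real k * of_int z0\<bar> \<le> \<bar>v - real k * of_int z\<bar>" for z
    using mult_left_mono[of _ _ "real k"] by (simp flip: scaled)
  hence "distk k v = \<bar>v - real k * of_int z0\<bar>"
    unfolding distk_def by (intro cInf_eq_minimum) auto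
  thus ?thesis ..
qed

lemma norm_e2pi_minus_1_ge:
  assumes "m > 0"
  shows "4 * distk m (real m * \<theta>) / real m \<le> cmod (e2pi \<theta> - 1)"
proof -
  define z where "z = \<lfloor>\<theta> + 1 / 2\<rfloor>"
  define y where "y = \<theta> - of_int z"
  have y: "\<bar>y\<bar> \<le> 1 / 2"
    unfolding y_def z_def by linarith
  have "e2pi \<theta> = e2pi y"
    using e2pi_add[of y "of_int z"] unfolding y_def by (simp add: e2pi_of_int)
  hence "cmod (e2pi \<theta> - 1) \<ge> 4 * \<bar>y\<bar>"
    using abs_sin_pi_ge[OF y] by (simp add: norm_e2pi_minus_1)
  moreover have "distk m (real m * \<theta>) \<le> real m * \<bar>y\<bar>"
    using distk_le[of m "real m * \<theta>" z]
    unfolding y_def right_diff_distrib[symmetric] abs_mult by simp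
  ultimately have "4 * distk m (real m * \<theta>) \<le> real m * cmod (e2pi \<theta> - 1)"
    using mult_left_mono[of "4 * \<bar>y\<bar>" "cmod (e2pi \<theta> - 1)" "real m"] by simp
  thus ?thesis
    using assms by (simp add: pos_divide_le_eq mult.commute)
qed

lemma inverse_power2_le_telescope:
  fixes y :: real
  assumes "y > 0"
  shows "1 / (y + 1)\<^sup>2 \<le> 1 / y - 1 / (y + 1)"
proof -
  have "1 / (y + 1)\<^sup>2 \<le> 1 / (y * (y + 1))"
    using assms by (intro divide_left_mono) (auto simp: power2_eq_square intro!: mult_right_mono)
  also have "\<dots> = 1 / y - 1 / (y + 1)"
    using assms by (simp add: field_simps)
  finally show ?thesis .
qed

lemma sum_inverse_power2_le:
  fixes x :: real
  assumes "x > 1"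
  shows "(\<Sum>i\<le>M. 1 / (x + real i)\<^sup>2) \<le> 1 / (x - 1) - 1 / (x + real M)"
proof (induction M)
  case 0
  show ?case
    using inverse_power2_le_telescope[of "x - 1"] assms by simp
next
  case (Suc M)
  have shift: "x + real (Suc M) = (x + real M) + 1"
    by simp
  have "(\<Sum>i\<le>Suc M. 1 / (x + real i)\<^sup>2)
      = (\<Sum>i\<le>M. 1 / (x + real i)\<^sup>2) + 1 / ((x + real M) + 1)\<^sup>2"
    by (simp only: sum.atMost_Suc shift)
  also have "\<dots> \<le> (1 / (x - 1) - 1 / (x + real M)) + (1 / (x + real M) - 1 / ((x + real M) + 1))"
    using Suc inverse_power2_le_telescope[of "x + real M"] assms by (intro add_mono) auto
  finally show ?case
    by (simp only: shift)
qed

lemma sum_inverse_power2_int_le: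
  fixes K :: "int set" and b R :: real
  assumes "finite K" "\<And>j. j \<in> K \<Longrightarrow> of_int j - b > R" "R > 1"
  shows "(\<Sum>j\<in>K. 1 / (of_int j - b)\<^sup>2) \<le> 1 / (R - 1)"
proof -
  define j0 where "j0 = \<lfloor>b + R\<rfloor> + 1"
  define x0 where "x0 = of_int j0 - b"
  define M where "M = nat (Max (insert j0 K) - j0)"
  have x0: "x0 > R"
    unfolding x0_def j0_def by linarith
  have "K \<subseteq> (\<lambda>i. j0 + int i) ` {..M}"
  proof
    fix j assume j: "j \<in> K"
    hence "\<lfloor>b + R\<rfloor> < j"
      using assms(2) by (simp add: floor_less_iff algebra_simps)
    hence "j0 \<le> j"
      unfolding j0_def by simp
    moreover have "j \<le> Max (insert j0 K)"
      using j assms(1) by simp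
    ultimately show "j \<in> (\<lambda>i. j0 + int i) ` {..M}"
      unfolding M_def by (intro image_eqI[of _ _ "nat (j - j0)"]) auto
  qed
  hence "(\<Sum>j\<in>K. 1 / (of_int j - b)\<^sup>2) \<le> (\<Sum>j\<in>(\<lambda>i. j0 + int i) ` {..M}. 1 / (of_int j - b)\<^sup>2)"
    by (intro sum_mono2) auto
  also have "\<dots> = (\<Sum>i\<le>M. 1 / (x0 + real i)\<^sup>2)"
    unfolding x0_def by (subst sum.reindex) (auto simp: inj_on_def algebra_simps)
  also have "\<dots> \<le> 1 / (x0 - 1) - 1 / (x0 + real M)"
    using x0 assms by (intro sum_inverse_power2_le) auto
  also have "\<dots> \<le> 1 / (x0 - 1)"
    using x0 assms by simp
  also have "\<dots> \<le> 1 / (R - 1)"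
    using x0 assms by (intro divide_left_mono) auto
  finally show ?thesis .
qed

lemma sum_inverse_power2_int_abs_le:
  fixes K :: "int set" and a R :: real
  assumes "finite K" "\<And>j. j \<in> K \<Longrightarrow> \<bar>of_int j - a\<bar> > R" "R > 1"
  shows "(\<Sum>j\<in>K. 1 / (of_int j - a)\<^sup>2) \<le> 2 / (R - 1)"
proof -
  define Kp where "Kp = {j\<in>K. of_int j > a}"
  have "(\<Sum>j\<in>K. 1 / (of_int j - a)\<^sup>2) = (\<Sum>j\<in>K - Kp. 1 / (of_int j - a)\<^sup>2) + (\<Sum>j\<in>Kp. 1 / (of_int j - a)\<^sup>2)"
    using assms(1) unfolding Kp_def by (intro sum.subset_diff) auto
  also have "(\<Sum>j\<in>K - Kp. 1 / (of_int j - a)\<^sup>2) = (\<Sum>j\<in>uminus ` (K - Kp). 1 / (of_int j - (- a))\<^sup>2)"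
    by (subst sum.reindex) (simp_all add: inj_on_def power2_commute)
  also have "\<dots> + (\<Sum>j\<in>Kp. 1 / (of_int j - a)\<^sup>2) \<le> 1 / (R - 1) + 1 / (R - 1)"
  proof (intro add_mono sum_inverse_power2_int_le)
    show "of_int j - - a > R" if "j \<in> uminus ` (K - Kp)" for j
      using that assms(2) unfolding Kp_def by force
    show "of_int j - a > R" if "j \<in> Kp" for j
      using that assms(2) unfolding Kp_def by force
  qed (use assms in \<open>auto simp: Kp_def\<close>)
  finally show ?thesis
    by simp
qed

lemma sum_inverse_distk_power2_le:
  fixes a R :: real
  assumes "m > 0" "R > 1"
  shows "(\<Sum>\<beta>\<in>{\<beta>. \<beta> < m \<and> distk m (a - real \<beta>) > R}. 1 / (distk m (a - real \<beta>))\<^sup>2) \<le> 2 / (R - 1)"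
proof -
  define S where "S = {\<beta>. \<beta> < m \<and> distk m (a - real \<beta>) > R}"
  have "\<exists>z::int. distk m (a - real \<beta>) = \<bar>(a - real \<beta>) - real m * of_int z\<bar>" for \<beta>
    using distk_attained[OF assms(1)] by blast
  then obtain zf where zf: "\<And>\<beta>. distk m (a - real \<beta>) = \<bar>(a - real \<beta>) - real m * of_int (zf \<beta>)\<bar>"
    by metis
  define k where "k \<beta> = int \<beta> + int m * zf \<beta>" for \<beta>
  have dist_k: "distk m (a - real \<beta>) = \<bar>of_int (k \<beta>) - a\<bar>" for \<beta>
    unfolding zf k_def by (simp add: algebra_simps)
  \<comment> \<open>\<open>k \<beta>\<close> is the point of \<open>\<beta> + m\<int>\<close> nearest to \<open>a\<close>; distinct \<open>\<beta> < m\<close> lie in distinct classes.\<close>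
  have "inj_on k S"
  proof
    fix \<beta>1 \<beta>2 assume \<beta>: "\<beta>1 \<in> S" "\<beta>2 \<in> S" "k \<beta>1 = k \<beta>2"
    hence "int \<beta>1 - int \<beta>2 = int m * (zf \<beta>2 - zf \<beta>1)"
      unfolding k_def by (simp add: algebra_simps)
    hence "int m dvd int \<beta>1 - int \<beta>2"
      by (rule dvdI)
    moreover have "\<bar>int \<beta>1 - int \<beta>2\<bar> < int m"
      using \<beta>(1,2) unfolding S_def by auto
    ultimately show "\<beta>1 = \<beta>2"
      using dvd_imp_le_int[of "int \<beta>1 - int \<beta>2" "int m"] by (cases "\<beta>1 = \<beta>2") auto
  qed
  define K where "K = k ` S"
  have "(\<Sum>\<beta>\<in>S. 1 / (distk m (a - real \<beta>))\<^sup>2) = (\<Sum>j\<in>K. 1 / (of_int j - a)\<^sup>2)"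
    unfolding K_def dist_k by (simp add: sum.reindex[OF \<open>inj_on k S\<close>])
  also have "\<dots> \<le> 2 / (R - 1)"
    using assms(2) unfolding K_def S_def by (intro sum_inverse_power2_int_abs_le) (auto simp: dist_k)
  finally show ?thesis
    unfolding S_def by simp
qed

section \<open>Truncated characters\<close>

definition cutoff :: "nat \<Rightarrow> (nat \<Rightarrow> complex) \<Rightarrow> nat \<Rightarrow> complex" where
  "cutoff L u x = (if x < L then u x else 0)"

lemma l2norm_cutoff_le:
  assumes "L \<le> n"
  shows "l2norm m (cutoff L u) \<le> l2norm n u"
proof -
  have "(l2norm m (cutoff L u))\<^sup>2 = (\<Sum>x<min L m. (cmod (u x))\<^sup>2)"
    unfolding l2norm_power2 cutoff_def by (rule sum.mono_neutral_cong_right) auto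
  also have "\<dots> \<le> (l2norm n u)\<^sup>2"
    unfolding l2norm_power2 using assms by (intro sum_mono2) auto
  finally show ?thesis
    using l2norm_nonneg power2_le_imp_le by blast
qed

lemma norm_sum_e2pi_power_le:
  assumes "m > 0" "distk m (real m * \<theta>) > 0"
  shows "cmod (\<Sum>x<L. e2pi \<theta> ^ x) \<le> real m / (2 * distk m (real m * \<theta>))"
proof -
  define d where "d = distk m (real m * \<theta>)"
  have lower: "4 * d / real m \<le> cmod (e2pi \<theta> - 1)"
    unfolding d_def by (rule norm_e2pi_minus_1_ge[OF assms(1)])
  have pos: "4 * d / real m > 0"
    using assms unfolding d_def by simp
  have "cmod (\<Sum>x<L. e2pi \<theta> ^ x) = cmod (e2pi \<theta> ^ L - 1) / cmod (e2pi \<theta> - 1)"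
    using lower pos by (subst geometric_sum) (auto simp: norm_divide)
  also have "\<dots> \<le> 2 / (4 * d / real m)"
    using norm_triangle_ineq4[of "e2pi \<theta> ^ L" 1] lower pos
    by (intro frac_le) (auto simp: norm_power)
  also have "\<dots> = real m / (2 * d)"
    using assms unfolding d_def by (simp add: field_simps)
  finally show ?thesis
    unfolding d_def .
qed

lemma norm_zfourier_cutoff_zchar_le:
  assumes "n > 0" "m > 0" "L \<le> m" "distk m (real m / real n * real \<alpha> - real \<beta>) > 0"
  shows "cmod (zfourier m (cutoff L (zchar n \<alpha>)) \<beta>)
    \<le> 1 / (2 * distk m (real m / real n * real \<alpha> - real \<beta>))"
proof -
  define \<theta> where "\<theta> = real \<alpha> / real n - real \<beta> / real m"
  have m\<theta>: "real m * \<theta> = real m / real n * real \<alpha> - real \<beta>"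
    unfolding \<theta>_def using assms by (simp add: field_simps)
  have "zfourier m (cutoff L (zchar n \<alpha>)) \<beta> = (1 / of_nat m) * (\<Sum>x<L. zchar n \<alpha> x * cnj (zchar m \<beta> x))"
    unfolding zfourier_def zinner_def cutoff_def
    by (rule arg_cong[where f = "\<lambda>s. (1 / of_nat m) * s"], rule sum.mono_neutral_cong_right)
       (use assms in auto)
  also have "\<dots> = (1 / of_nat m) * (\<Sum>x<L. e2pi \<theta> ^ x)"
    unfolding zchar_mult_cnj_zchar \<theta>_def ..
  finally have "cmod (zfourier m (cutoff L (zchar n \<alpha>)) \<beta>) = cmod (\<Sum>x<L. e2pi \<theta> ^ x) / real m"
    by (simp add: norm_mult norm_divide)
  also have "\<dots> \<le> (real m / (2 * distk m (real m * \<theta>))) / real m"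
    using norm_sum_e2pi_power_le[OF assms(2), of \<theta> L] assms m\<theta> by (intro divide_right_mono) auto
  finally show ?thesis
    using assms m\<theta> by simp
qed

lemma l2norm_zresidual_cutoff_zchar_power2_le:
  assumes "n > 0" "m > 0" "L \<le> m" "R > 1" "B \<subseteq> {..<m}"
    and far: "{..<m} - B \<subseteq> {\<beta>. \<beta> < m \<and> distk m (real m / real n * real \<alpha> - real \<beta>) > R}"
  shows "(l2norm m (zresidual m B (cutoff L (zchar n \<alpha>))))\<^sup>2 \<le> real m / (2 * (R - 1))"
proof -
  define a where "a = real m / real n * real \<alpha>"
  define S where "S = {\<beta>. \<beta> < m \<and> distk m (a - real \<beta>) > R}"
  define u where "u = cutoff L (zchar n \<alpha>)"
  have "(\<Sum>\<beta>\<in>{..<m} - B. (cmod (zfourier m u \<beta>))\<^sup>2) \<le> (\<Sum>\<beta>\<in>S. (cmod (zfourier m u \<beta>))\<^sup>2)"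
    using far unfolding S_def a_def by (intro sum_mono2) auto
  also have "\<dots> \<le> (\<Sum>\<beta>\<in>S. 1 / 4 * (1 / (distk m (a - real \<beta>))\<^sup>2))"
  proof (rule sum_mono)
    fix \<beta> assume "\<beta> \<in> S"
    hence "distk m (a - real \<beta>) > 0"
      using assms unfolding S_def by auto
    hence "cmod (zfourier m u \<beta>) \<le> 1 / (2 * distk m (a - real \<beta>))"
      unfolding u_def a_def using assms by (intro norm_zfourier_cutoff_zchar_le) auto
    hence "(cmod (zfourier m u \<beta>))\<^sup>2 \<le> (1 / (2 * distk m (a - real \<beta>)))\<^sup>2"
      by (intro power_mono) auto
    thus "(cmod (zfourier m u \<beta>))\<^sup>2 \<le> 1 / 4 * (1 / (distk m (a - real \<beta>))\<^sup>2)"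
      by (simp add: power_divide power_mult_distrib)
  qed
  also have "\<dots> \<le> 1 / 4 * (2 / (R - 1))"
    unfolding S_def sum_distrib_left[symmetric]
    using assms by (intro mult_left_mono sum_inverse_distk_power2_le) auto
  finally have "(\<Sum>\<beta>\<in>{..<m} - B. (cmod (zfourier m u \<beta>))\<^sup>2) \<le> 1 / (2 * (R - 1))"
    by simp
  thus ?thesis
    unfolding u_def l2norm_zresidual_power2[OF assms(2,5)]
    using mult_left_mono[of _ _ "real m"] by fastforce
qed

section \<open>The two contributions to the residual of \<open>g\<close>\<close>

lemma l2norm_zresidual_cutoff_le:
  assumes "m > 0" "L \<le> n" "\<Gamma>' \<subseteq> {..<m}"
  shows "l2norm m (zresidual m \<Gamma>' (cutoff L f))
    \<le> l2norm m (\<lambda>x. \<Sum>\<alpha>\<in>\<Gamma>. zfourier n f \<alpha> * zresidual m \<Gamma>' (cutoff L (zchar n \<alpha>)) x)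
      + l2norm n (zresidual n \<Gamma> f)"
proof -
  define h where "h = zresidual n \<Gamma> f"
  have decomposition:
    "cutoff L f = (\<lambda>x. (\<Sum>\<alpha>\<in>\<Gamma>. zfourier n f \<alpha> * cutoff L (zchar n \<alpha>) x) + cutoff L h x)"
    unfolding h_def cutoff_def zresidual_def zrestr_def by auto
  have "zresidual m \<Gamma>' (cutoff L f)
      = (\<lambda>x. (\<Sum>\<alpha>\<in>\<Gamma>. zfourier n f \<alpha> * zresidual m \<Gamma>' (cutoff L (zchar n \<alpha>)) x)
           + zresidual m \<Gamma>' (cutoff L h) x)"
    unfolding decomposition fun_eq_iff zresidual_add zresidual_sum by simp
  hence "l2norm m (zresidual m \<Gamma>' (cutoff L f))
      \<le> l2norm m (\<lambda>x. \<Sum>\<alpha>\<in>\<Gamma>. zfourier n f \<alpha> * zresidual m \<Gamma>' (cutoff L (zchar n \<alpha>)) x)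
        + l2norm m (zresidual m \<Gamma>' (cutoff L h))"
    by (simp add: l2norm_add_le)
  also have "l2norm m (zresidual m \<Gamma>' (cutoff L h)) \<le> l2norm n h"
    using l2norm_zresidual_le[OF assms(1,3)] l2norm_cutoff_le[OF assms(2)] by (rule order_trans)
  finally show ?thesis
    unfolding h_def by simp
qed

lemma l2norm_sum_zfourier_scale_power2_le:
  assumes "n > 0" "\<Gamma> \<subseteq> {..<n}" "\<And>\<alpha>. \<alpha> \<in> \<Gamma> \<Longrightarrow> (l2norm m (w \<alpha>))\<^sup>2 \<le> D"
  shows "(l2norm m (\<lambda>x. \<Sum>\<alpha>\<in>\<Gamma>. zfourier n f \<alpha> * w \<alpha> x))\<^sup>2 \<le> znorm2sq n f * (real (card \<Gamma>) * D)"
proof -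
  have "finite \<Gamma>"
    using assms(2) finite_subset by blast
  have "(\<Sum>\<alpha>\<in>\<Gamma>. (cmod (zfourier n f \<alpha>))\<^sup>2) \<le> znorm2sq n f"
    using bessel[OF assms(1,2), of f] assms(1)
    by (simp add: znorm2sq_eq_l2norm le_divide_eq mult.commute)
  moreover have "(\<Sum>\<alpha>\<in>\<Gamma>. (l2norm m (w \<alpha>))\<^sup>2) \<le> real (card \<Gamma>) * D"
    using assms(3) by (rule sum_bounded_above)
  ultimately show ?thesis
    using \<open>finite \<Gamma>\<close> l2norm_nonneg[of n f]
    by (intro order_trans[OF l2norm_sum_scale_power2_le] mult_mono)
       (auto simp: sum_nonneg znorm2sq_eq_l2norm)
qed

lemma l2norm_zresidual_cutoff_main_part_power2_le:
  fixes f :: "nat \<Rightarrow> complex"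
  assumes "n > 0" "m > 0" "L \<le> m" "\<Gamma> \<subseteq> {..<n}" "\<epsilon>' > 0"
    and r_def: "r = real (card \<Gamma>) * znorm2sq n f / (2 * \<epsilon>')"
  defines "\<Gamma>' \<equiv> {\<beta>. \<beta> < m \<and> (\<exists>\<alpha>\<in>\<Gamma>. distk m (real m / real n * real \<alpha> - real \<beta>) \<le> r + 1)}"
  shows "(l2norm m (\<lambda>x. \<Sum>\<alpha>\<in>\<Gamma>. zfourier n f \<alpha> * zresidual m \<Gamma>' (cutoff L (zchar n \<alpha>)) x))\<^sup>2
    \<le> real m * \<epsilon>'"
  (is "(l2norm m (\<lambda>x. \<Sum>\<alpha>\<in>\<Gamma>. _ * ?w \<alpha> x))\<^sup>2 \<le> _")
proof -
  have prod: "real (card \<Gamma>) * znorm2sq n f = 2 * \<epsilon>' * r"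
    unfolding r_def using assms(5) by simp
  have "r \<ge> 0"
    unfolding r_def znorm2sq_eq_l2norm using assms(5) by simp
  then consider "r = 0" | "r > 0"
    by linarith
  thus ?thesis
  proof cases
    case 1
    have "(l2norm m (?w \<alpha>))\<^sup>2 \<le> (\<Sum>\<alpha>\<in>\<Gamma>. (l2norm m (?w \<alpha>))\<^sup>2)" if "\<alpha> \<in> \<Gamma>" for \<alpha>
      using that assms(4) finite_subset by (intro member_le_sum) auto
    hence "(l2norm m (\<lambda>x. \<Sum>\<alpha>\<in>\<Gamma>. zfourier n f \<alpha> * ?w \<alpha> x))\<^sup>2
        \<le> znorm2sq n f * (real (card \<Gamma>) * (\<Sum>\<alpha>\<in>\<Gamma>. (l2norm m (?w \<alpha>))\<^sup>2))"
      by (rule l2norm_sum_zfourier_scale_power2_le[OF assms(1,4)])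
    also have "\<dots> = (real (card \<Gamma>) * znorm2sq n f) * (\<Sum>\<alpha>\<in>\<Gamma>. (l2norm m (?w \<alpha>))\<^sup>2)"
      by (simp only: ac_simps)
    finally show ?thesis
      using prod 1 assms(2,5) by simp
  next
    case 2
    have "(l2norm m (?w \<alpha>))\<^sup>2 \<le> real m / (2 * r)" if "\<alpha> \<in> \<Gamma>" for \<alpha>
    proof -
      have "{..<m} - \<Gamma>' \<subseteq> {\<beta>. \<beta> < m \<and> distk m (real m / real n * real \<alpha> - real \<beta>) > r + 1}"
        using that unfolding \<Gamma>'_def by force
      hence "(l2norm m (?w \<alpha>))\<^sup>2 \<le> real m / (2 * (r + 1 - 1))"
        using assms 2 by (intro l2norm_zresidual_cutoff_zchar_power2_le) (auto simp: \<Gamma>'_def)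
      thus ?thesis
        by simp
    qed
    hence "(l2norm m (\<lambda>x. \<Sum>\<alpha>\<in>\<Gamma>. zfourier n f \<alpha> * ?w \<alpha> x))\<^sup>2
        \<le> znorm2sq n f * (real (card \<Gamma>) * (real m / (2 * r)))"
      by (rule l2norm_sum_zfourier_scale_power2_le[OF assms(1,4)])
    also have "\<dots> = (real (card \<Gamma>) * znorm2sq n f) * real m / (2 * r)"
      by simp
    finally show ?thesis
      using prod 2 by (simp add: mult.commute)
  qed
qed

lemma power2_add_le_sqrt_bound:
  fixes a b X Y :: real
  assumes "0 \<le> a" "0 \<le> b" "a\<^sup>2 \<le> X" "b\<^sup>2 \<le> Y"
  shows "(a + b)\<^sup>2 \<le> X + Y + 2 * sqrt (X * Y)"
proof -
  have nonneg: "0 \<le> X" "0 \<le> Y"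
    using assms(3,4) zero_le_power2[of a] zero_le_power2[of b] by linarith+
  have "a * b \<le> sqrt X * sqrt Y"
    using assms nonneg by (intro mult_mono real_le_rsqrt) auto
  thus ?thesis
    using assms nonneg by (simp add: power2_sum real_sqrt_mult)
qed

theorem proposition4p3:
  fixes m n :: nat and f g :: "nat \<Rightarrow> complex" and \<Gamma> :: "nat set"
    and \<epsilon> \<epsilon>' :: real
  assumes "n > 0" and "m > 0"
    and "\<Gamma> \<subseteq> {..<n}"
    and "\<epsilon> > 0"
    and "znorm2sq n (\<lambda>x. f x - zrestr n f \<Gamma> x) \<le> \<epsilon>"
    and "\<And>x. x < m \<Longrightarrow> g x = (if x < min n m then f x else 0)"
    and "\<epsilon>' > 0"
  shows "let r = real (card \<Gamma>) * znorm2sq n f / (2 * \<epsilon>');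
             \<Gamma>' = {\<beta>. \<beta> < m \<and> (\<exists>\<alpha>\<in>\<Gamma>. distk m (real m / real n * real \<alpha> - real \<beta>) \<le> r + 1)};
             t = real n / real m
         in znorm2sq m (\<lambda>x. g x - zrestr m g \<Gamma>' x) \<le> t * \<epsilon> + \<epsilon>' + 2 * sqrt (t * \<epsilon> * \<epsilon>')"
proof -
  define \<Gamma>' where "\<Gamma>' = {\<beta>. \<beta> < m \<and> (\<exists>\<alpha>\<in>\<Gamma>.
    distk m (real m / real n * real \<alpha> - real \<beta>) \<le> real (card \<Gamma>) * znorm2sq n f / (2 * \<epsilon>') + 1)}"
  define t where "t = real n / real m"
  have "\<Gamma>' \<subseteq> {..<m}"
    unfolding \<Gamma>'_def by auto
  have "znorm2sq m (\<lambda>x. g x - zrestr m g \<Gamma>' x) = (l2norm m (zresidual m \<Gamma>' (cutoff (min n m) f)))\<^sup>2 / m"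
    unfolding zresidual_def[symmetric] znorm2sq_eq_l2norm
    using assms(6) by (simp add: cutoff_def cong: l2norm_cong zresidual_cong)
  also have "\<dots> \<le> (real m * \<epsilon>' + real n * \<epsilon> + 2 * sqrt (real m * \<epsilon>' * (real n * \<epsilon>))) / m"
  proof (intro divide_right_mono order_trans[OF power_mono power2_add_le_sqrt_bound])
    show "(l2norm n (zresidual n \<Gamma> f))\<^sup>2 \<le> real n * \<epsilon>"
      using assms(1,5) by (simp add: znorm2sq_eq_l2norm zresidual_def field_simps)
    show "(l2norm m (\<lambda>x. \<Sum>\<alpha>\<in>\<Gamma>. zfourier n f \<alpha> * zresidual m \<Gamma>' (cutoff (min n m) (zchar n \<alpha>)) x))\<^sup>2
        \<le> real m * \<epsilon>'"
      unfolding \<Gamma>'_def using assms by (intro l2norm_zresidual_cutoff_main_part_power2_le) auto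
  qed (use l2norm_zresidual_cutoff_le[OF assms(2) _ \<open>\<Gamma>' \<subseteq> {..<m}\<close>] in \<open>auto simp: l2norm_nonneg\<close>)
  also have "\<dots> = t * \<epsilon> + \<epsilon>' + 2 * sqrt (t * \<epsilon> * \<epsilon>')"
  proof -
    have "real m * \<epsilon>' * (real n * \<epsilon>) = (real m)\<^sup>2 * (t * \<epsilon> * \<epsilon>')"
      unfolding t_def using assms(2) by (simp add: power2_eq_square field_simps)
    hence "sqrt (real m * \<epsilon>' * (real n * \<epsilon>)) = real m * sqrt (t * \<epsilon> * \<epsilon>')"
      by (simp only: real_sqrt_mult real_sqrt_abs)
    thus ?thesis
      using assms(2) by (simp add: add_divide_distrib t_def)
  qed
  finally show ?thesis
    unfolding \<Gamma>'_def t_def Let_def .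
qed

end
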